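(* Let $q>0$, $q\neq1$. For every integer $N\ge0$, the $q$-Hermite polynomial $H_N(x;q)$ satisfies, for all real $x\neq0$, $$2D_x^2H_N(x;q)-[2]_q^2\,x\frac{d}{dx}H_N(x;q)+[2]_q^2\,N\,H_N(x;q)=0 .$$
   Context: For $n\ge 0$ let $[n]_q=\frac{q^n-1}{q-1}$, $[0]_q!=1$, $[n]_q!=[1]_q\cdots[n]_q$, and $e_q(z)=\sum_{n\ge0}z^n/[n]_q!$. The $q$-derivative is $D_xf(x)=\frac{f(qx)-f(x)}{(q-1)x}$ and $D_x^2=D_x\circ D_x$. The $q$-Hermite polynomials $H_N(x;q)$ are defined by the identity of formal power series in $t$: $e^{-t^2}e_q([2]_q t x)=\sum_{N\ge0}H_N(x;q)\,t^N/[N]_q!$. *)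

theory Defs
  imports "HOL-Analysis.Analysis" "HOL-Computational_Algebra.Formal_Power_Series"
begin

definition qint :: "real \<Rightarrow> nat \<Rightarrow> real" where
  "qint q n = (q ^ n - 1) / (q - 1)"

definition qfact :: "real \<Rightarrow> nat \<Rightarrow> real" where
  "qfact q n = (\<Prod>k=1..n. qint q k)"

text \<open>The q-exponential e_q(z) as a formal power series in t, evaluated at z = c t.\<close>
definition eq_fps :: "real \<Rightarrow> real \<Rightarrow> real fps" where
  "eq_fps q c = Abs_fps (\<lambda>n. c ^ n / qfact q n)"

definition qHermite_gf :: "real \<Rightarrow> real \<Rightarrow> real fps" where
  "qHermite_gf q x = (fps_exp (-1) oo (fps_X ^ 2)) * eq_fps q (qint q 2 * x)"

definition qHermite :: "nat \<Rightarrow> real \<Rightarrow> real \<Rightarrow> real" where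
  "qHermite N x q = qfact q N * fps_nth (qHermite_gf q x) N"

definition qD :: "real \<Rightarrow> (real \<Rightarrow> real) \<Rightarrow> real \<Rightarrow> real" where
  "qD q f x = (f (q * x) - f x) / ((q - 1) * x)"

end

theory Submission
  imports Defs
begin

text \<open>
  Expanding the generating function gives H_N(x) = sum_i a_i x^(N-i) with
  a_i = [N]_q! g_i [2]_q^(N-i) / [N-i]_q!, where g_i is the i-th coefficient of e^(-t^2).
  Since D_x x^m = [m]_q x^(m-1) and x (d/dx) x^m = m x^m, the coefficient of x^(N-j) on the
  left-hand side is 2 [N-j+2]_q [N-j+1]_q a_(j-2) + [2]_q^2 j a_j. It vanishes because
  (n+2) g_(n+2) = -2 g_n, which is the differential equation y' = -2ty of e^(-t^2) read
  coefficientwise.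
\<close>

lemma qint_0 [simp]: "qint q 0 = 0"
  by (simp add: qint_def)

lemma qint_nonzero:
  assumes "q > 0" and "q \<noteq> 1" and "k \<noteq> 0"
  shows "qint q k \<noteq> 0"
  using assms power_eq_1_iff[of q k] by (auto simp: qint_def)

lemma qfact_nonzero:
  assumes "q > 0" and "q \<noteq> 1"
  shows "qfact q k \<noteq> 0"
  using qint_nonzero[OF assms] by (auto simp: qfact_def)

lemma qfact_Suc: "qfact q (Suc k) = qfact q k * qint q (Suc k)"
  by (simp add: qfact_def)

lemma sum_atMost_shift2:
  fixes F :: "nat \<Rightarrow> 'a::comm_monoid_add"
  assumes "\<And>i. i \<le> N \<Longrightarrow> N < i + 2 \<Longrightarrow> F i = 0"
  shows "(\<Sum>i\<le>N. F i) = (\<Sum>j\<le>N. if 2 \<le> j then F (j - 2) else 0)"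
  using assms
  by (intro sum.reindex_bij_witness_not_neutral
        [of "{i. i \<le> N \<and> N < i + 2}" "{j. j < 2}" _ "\<lambda>j. j - 2" "\<lambda>i. i + 2"]) auto

lemma qD_cong_nonzero:
  assumes "\<And>y. y \<noteq> 0 \<Longrightarrow> f y = g y" and "q \<noteq> 0" and "x \<noteq> 0"
  shows "qD q f x = qD q g x"
  using assms by (simp add: qD_def)

lemma qD_power:
  assumes "q \<noteq> 1" and "x \<noteq> 0"
  shows "qD q (\<lambda>y. y ^ m) x = qint q m * x ^ (m - 1)"
proof (cases m)
  case 0
  then show ?thesis by (simp add: qD_def qint_def)
next
  case (Suc k)
  then show ?thesis
    using assms by (simp add: qD_def qint_def power_mult_distrib field_simps)
qed

lemma qD_sum_powers:
  assumes "q \<noteq> 1" and "x \<noteq> 0"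
  shows "qD q (\<lambda>y. \<Sum>i\<in>A. a i * y ^ e i) x = (\<Sum>i\<in>A. a i * qint q (e i) * x ^ (e i - 1))"
proof -
  have "qD q (\<lambda>y. \<Sum>i\<in>A. a i * y ^ e i) x = (\<Sum>i\<in>A. a i * qD q (\<lambda>y. y ^ e i) x)"
    by (simp add: qD_def sum_subtractf[symmetric] sum_divide_distrib right_diff_distrib)
  then show ?thesis
    using qD_power[OF assms] by (simp add: mult.assoc)
qed

lemma qD_qD_sum_powers:
  assumes "q \<noteq> 0" and "q \<noteq> 1" and "x \<noteq> 0"
  shows "qD q (qD q (\<lambda>y. \<Sum>i\<in>A. a i * y ^ e i)) x
           = (\<Sum>i\<in>A. a i * qint q (e i) * qint q (e i - 1) * x ^ (e i - 2))"
proof -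
  have "qD q (qD q (\<lambda>y. \<Sum>i\<in>A. a i * y ^ e i)) x
      = qD q (\<lambda>y. \<Sum>i\<in>A. a i * qint q (e i) * y ^ (e i - 1)) x"
    using assms by (intro qD_cong_nonzero qD_sum_powers)
  also have "\<dots> = (\<Sum>i\<in>A. a i * qint q (e i) * qint q (e i - 1) * x ^ (e i - 2))"
    using qD_sum_powers[OF assms(2,3), of "\<lambda>i. a i * qint q (e i)" "\<lambda>i. e i - 1" A]
    by (simp add: diff_diff_left numeral_2_eq_2)
  finally show ?thesis .
qed

lemma x_times_deriv_sum_powers:
  fixes x :: real
  assumes "finite A"
  shows "x * deriv (\<lambda>y. \<Sum>i\<in>A. a i * y ^ e i) x = (\<Sum>i\<in>A. a i * real (e i) * x ^ e i)"
proof -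
  have deriv_sum: "deriv (\<lambda>y. \<Sum>i\<in>A. a i * y ^ e i) x
      = (\<Sum>i\<in>A. a i * (real (e i) * x ^ (e i - 1)))"
    by (intro DERIV_imp_deriv DERIV_sum DERIV_cmult DERIV_pow[THEN DERIV_cong]) simp
  have x_times_power_pred: "x * (c * (real n * x ^ (n - 1))) = c * real n * x ^ n" for c n
    by (cases n) auto
  show ?thesis
    unfolding deriv_sum sum_distrib_left x_times_power_pred ..
qed

lemma hermite_operator_sum_powers:
  fixes a :: "nat \<Rightarrow> real" and c q x :: real
  assumes "q \<noteq> 0" and "q \<noteq> 1" and "x \<noteq> 0"
  shows "2 * qD q (qD q (\<lambda>y. \<Sum>i\<le>N. a i * y ^ (N - i))) x
           - c * x * deriv (\<lambda>y. \<Sum>i\<le>N. a i * y ^ (N - i)) x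
           + c * real N * (\<Sum>i\<le>N. a i * x ^ (N - i))
         = (\<Sum>j\<le>N. (2 * (if 2 \<le> j then a (j - 2) * qint q (N - j + 2) * qint q (N - j + 1) else 0)
                      + c * real j * a j) * x ^ (N - j))"
proof -
  have "qD q (qD q (\<lambda>y. \<Sum>i\<le>N. a i * y ^ (N - i))) x
      = (\<Sum>i\<le>N. a i * qint q (N - i) * qint q (N - i - 1) * x ^ (N - i - 2))"
    by (rule qD_qD_sum_powers[OF assms])
  also have "\<dots> = (\<Sum>j\<le>N. (if 2 \<le> j then a (j - 2) * qint q (N - j + 2) * qint q (N - j + 1) else 0)
                              * x ^ (N - j))"
    by (subst sum_atMost_shift2) (auto intro!: sum.cong simp: Suc_diff_le numeral_2_eq_2)
  finally have qD_qD: "qD q (qD q (\<lambda>y. \<Sum>i\<le>N. a i * y ^ (N - i))) x = \<dots>" .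
  have deriv_terms: "c * real N * (\<Sum>i\<le>N. a i * x ^ (N - i))
      - c * x * deriv (\<lambda>y. \<Sum>i\<le>N. a i * y ^ (N - i)) x
      = (\<Sum>j\<le>N. c * real j * a j * x ^ (N - j))"
    unfolding mult.assoc[of c x] x_times_deriv_sum_powers[OF finite_atMost]
    by (simp add: sum_distrib_left sum_subtractf[symmetric] algebra_simps of_nat_diff)
  show ?thesis
    using qD_qD deriv_terms
    by (simp add: sum.distrib sum_distrib_left algebra_simps)
qed

definition neg_sq_exp_coeff :: "nat \<Rightarrow> real" where
  "neg_sq_exp_coeff n = (if even n then (-1) ^ (n div 2) / fact (n div 2) else 0)"

lemma fps_nth_exp_neg_compose_square:
  "fps_nth (fps_exp (-1) oo fps_X ^ 2) n = neg_sq_exp_coeff n"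
proof -
  have "fps_nth (fps_exp (-1::real) oo fps_X ^ 2) n
      = (\<Sum>i=0..n. fps_nth (fps_exp (-1)) i * (if n = 2 * i then 1 else 0))"
    by (simp add: fps_compose_nth power_mult[symmetric])
  also have "\<dots> = neg_sq_exp_coeff n"
  proof (cases "even n")
    case True
    then obtain k where "n = 2 * k" by blast
    then show ?thesis
      by (simp add: neg_sq_exp_coeff_def sum.delta'[of "{0..n}", simplified] if_distrib cong: if_cong)
  next
    case False
    then show ?thesis by (auto simp: neg_sq_exp_coeff_def intro!: sum.neutral)
  qed
  finally show ?thesis .
qed

lemma neg_sq_exp_coeff_rec: "real (n + 2) * neg_sq_exp_coeff (n + 2) = - 2 * neg_sq_exp_coeff n"
proof (cases "even n")
  case True
  then obtain k where k: "n = 2 * k" by blast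
  have "(2 * k + 2) div 2 = Suc k" by simp
  moreover have "(fact (Suc k) :: real) = (real k + 1) * fact k"
    by simp
  ultimately show ?thesis
    by (simp add: k neg_sq_exp_coeff_def divide_simps del: fact_Suc)
next
  case False
  then show ?thesis by (simp add: neg_sq_exp_coeff_def)
qed

definition qHermite_coeff :: "real \<Rightarrow> nat \<Rightarrow> nat \<Rightarrow> real" where
  "qHermite_coeff q N i = qfact q N * neg_sq_exp_coeff i * qint q 2 ^ (N - i) / qfact q (N - i)"

lemma qHermite_eq_sum_powers: "qHermite N y q = (\<Sum>i\<le>N. qHermite_coeff q N i * y ^ (N - i))"
  unfolding qHermite_def qHermite_gf_def fps_mult_nth fps_nth_exp_neg_compose_square eq_fps_def
    qHermite_coeff_def
  by (simp add: atLeast0AtMost sum_distrib_left power_mult_distrib mult_ac)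

lemma qHermite_coeff_rec:
  assumes "q > 0" and "q \<noteq> 1" and "i + 2 \<le> N"
  shows "2 * qHermite_coeff q N i * qint q (N - i) * qint q (N - i - 1)
           + (qint q 2)\<^sup>2 * real (i + 2) * qHermite_coeff q N (i + 2) = 0"
proof -
  define m where "m = N - (i + 2)"
  have N_minus: "N - i = m + 2" "N - i - 1 = m + 1" "N - (i + 2) = m"
    using assms(3) by (auto simp: m_def)
  have qfact_m2: "qfact q (m + 2) = qfact q m * qint q (m + 1) * qint q (m + 2)"
    by (simp add: numeral_2_eq_2 qfact_Suc)
  have "qfact q m \<noteq> 0" "qint q (m + 1) \<noteq> 0" "qint q (m + 2) \<noteq> 0"
    using qfact_nonzero[OF assms(1,2)] qint_nonzero[OF assms(1,2)] by auto
  then have "2 * qHermite_coeff q N i * qint q (N - i) * qint q (N - i - 1)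
      = 2 * qfact q N * neg_sq_exp_coeff i * qint q 2 ^ (m + 2) / qfact q m"
    unfolding qHermite_coeff_def N_minus qfact_m2 by (simp add: field_simps)
  moreover have "(qint q 2)\<^sup>2 * real (i + 2) * qHermite_coeff q N (i + 2)
      = qfact q N * (real (i + 2) * neg_sq_exp_coeff (i + 2)) * qint q 2 ^ (m + 2) / qfact q m"
    unfolding qHermite_coeff_def N_minus by (simp add: power_add power2_eq_square)
  ultimately show ?thesis
    unfolding neg_sq_exp_coeff_rec by simp
qed

lemma qHermite_coeff_cancel:
  assumes "q > 0" and "q \<noteq> 1" and "j \<le> N"
  shows "2 * (if 2 \<le> j then qHermite_coeff q N (j - 2) * qint q (N - j + 2) * qint q (N - j + 1) else 0)
           + (qint q 2)\<^sup>2 * real j * qHermite_coeff q N j = 0"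
proof (cases "2 \<le> j")
  case True
  define i where "i = j - 2"
  have "j = i + 2" "N - j + 2 = N - i" "N - j + 1 = N - i - 1"
    using True assms(3) by (auto simp: i_def)
  then show ?thesis
    using qHermite_coeff_rec[OF assms(1,2), of i N] assms(3) by simp
next
  case False
  then have "j = 0 \<or> j = 1" by auto
  then show ?thesis
    by (auto simp: qHermite_coeff_def neg_sq_exp_coeff_def)
qed

theorem mainTheorem6:
  fixes q x :: real and N :: nat
  assumes "q > 0" and "q \<noteq> 1" and "x \<noteq> 0"
  shows "2 * qD q (qD q (\<lambda>y. qHermite N y q)) x
           - (qint q 2)^2 * x * deriv (\<lambda>y. qHermite N y q) x
           + (qint q 2)^2 * real N * qHermite N x q = 0"
proof -
  have qHermite_fun: "(\<lambda>y. qHermite N y q) = (\<lambda>y. \<Sum>i\<le>N. qHermite_coeff q N i * y ^ (N - i))"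
    by (simp only: qHermite_eq_sum_powers)
  have "q \<noteq> 0"
    using assms(1) by simp
  show ?thesis
    unfolding qHermite_fun qHermite_eq_sum_powers[of N x q]
      hermite_operator_sum_powers[OF \<open>q \<noteq> 0\<close> assms(2,3)]
    using qHermite_coeff_cancel[OF assms(1,2)] by (simp add: sum.neutral)
qed

end
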